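(* For every index coding instance $\mathcal{I}=\{(i\mid A_i):i\in[m]\}$, $\beta_{\text{P-UMCD}}(\mathcal{I})\le\beta_{\text{PCC}}(\mathcal{I})$.
   Context: For $M\subseteq[m]$, the subinstance $M$ has receivers $M$ and side information $A_i\cap M$; $\beta_{\text{MDS}}(M)=|M|-\min_{i\in M}|M\cap A_i|$. $\beta_{\text{PCC}}(\mathcal{I})=\min\sum_{j}\beta_{\text{MDS}}(M_j)$ and $\beta_{\text{P-UMCD}}(\mathcal{I})=\min\sum_j\beta_{\text{UMCD}}(M_j)$, both minima over partitions of $[m]$ into pairwise disjoint nonempty sets $M_1,\dots,M_n$. UMCD algorithm on a (sub)instance with receiver set $V$: $B_i=V\setminus(A_i\cup\{i\})$ (side information taken within $V$); for a $0/1$ matrix $\boldsymbol{G}$, $\boldsymbol{G}_{[k]}^L$ is the submatrix of the first $k$ rows and columns $L$, and $\mathrm{mcm}$ is the maximum number of $1$-entries in distinct rows and columns (0 if no columns); $N=V$, $k=0$; while $N\ne\emptyset$: $k\leftarrow k+1$; pick $w\in N$ minimizing $|A_w|$ (arbitrary tie-breaking); row $k$ of $\boldsymbol{G}$ is the indicator of $\{w\}\cup A_w$; remove $w$; remove every $i\in N$ with $\mathrm{mcm}(\boldsymbol{G}_{[k]}^{\{i\}\cup B_i})=\mathrm{mcm}(\boldsymbol{G}_{[k]}^{B_i})+1$; output $\beta_{\text{UMCD}}=k$ (a fixed execution for each subinstance). *)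

theory Defs
  imports Main
begin

text \<open>Index coding instance: receivers [m] = {1..m}, side information A i.
  All notions below are relative to a (sub)instance with receiver set V,
  whose side information is A i \<inter> V.\<close>

definition beta_mds :: "(nat \<Rightarrow> nat set) \<Rightarrow> nat set \<Rightarrow> nat" where
  "beta_mds A M = card M - (MIN i\<in>M. card (M \<inter> A i))"

definition is_partition :: "nat set \<Rightarrow> nat set set \<Rightarrow> bool" where
  "is_partition S P \<longleftrightarrow> finite P \<and> (\<forall>M\<in>P. M \<noteq> {}) \<and>
     (\<forall>M1\<in>P. \<forall>M2\<in>P. M1 \<noteq> M2 \<longrightarrow> M1 \<inter> M2 = {}) \<and> \<Union>P = S"

definition beta_pcc :: "nat \<Rightarrow> (nat \<Rightarrow> nat set) \<Rightarrow> nat" where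
  "beta_pcc m A = Min {(\<Sum>M\<in>P. beta_mds A M) | P. is_partition {1..m} P}"

text \<open>0/1 matrix with columns indexed by receivers, given as a list of rows;
  row r has a 1 in column c iff c \<in> rows ! r.
  mcm of the submatrix of the first k rows with columns L (maximum number of
  1-entries in distinct rows and distinct columns).\<close>
definition mcm :: "nat set list \<Rightarrow> nat \<Rightarrow> nat set \<Rightarrow> nat" where
  "mcm rows k L = Max {card P | P. P \<subseteq> {0..<k} \<times> L \<and> (\<forall>(r,c)\<in>P. c \<in> rows ! r)
        \<and> inj_on fst P \<and> inj_on snd P}"

text \<open>Executions of the UMCD algorithm on the subinstance with receiver set V:
  umcd_exec A V N rows means the state (remaining set N, rows of G so far) is reachable.
  Tie-breaking is arbitrary, hence a relation.\<close>
inductive umcd_exec :: "(nat \<Rightarrow> nat set) \<Rightarrow> nat set \<Rightarrow> nat set \<Rightarrow> nat set list \<Rightarrow> bool"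
  for A :: "nat \<Rightarrow> nat set" and V :: "nat set" where
  init: "umcd_exec A V V []"
| step: "\<lbrakk> umcd_exec A V N rows; N \<noteq> {}; w \<in> N;
           \<forall>u\<in>N. card (A w \<inter> V) \<le> card (A u \<inter> V);
           rows' = rows @ [insert w (A w \<inter> V)];
           N' = {i \<in> N - {w}. \<not> (mcm rows' (length rows') (insert i (V - (A i \<union> {i})))
                                  = mcm rows' (length rows') (V - (A i \<union> {i})) + 1)} \<rbrakk>
         \<Longrightarrow> umcd_exec A V N' rows'"

definition umcd_output :: "(nat \<Rightarrow> nat set) \<Rightarrow> nat set \<Rightarrow> nat \<Rightarrow> bool" where
  "umcd_output A V k \<longleftrightarrow> (\<exists>rows. umcd_exec A V {} rows \<and> length rows = k)"

text \<open>P-UMCD, where f fixes the execution (its output) chosen for each subinstance.\<close>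
definition beta_pumcd :: "nat \<Rightarrow> (nat set \<Rightarrow> nat) \<Rightarrow> nat" where
  "beta_pumcd m f = Min {(\<Sum>M\<in>P. f M) | P. is_partition {1..m} P}"

end

theory Submission
  imports Defs
begin

text \<open>
  Because \<open>\<beta>_PCC\<close> is attained by some partition, it suffices to show that on every
  subinstance \<open>M\<close> each execution of UMCD stops after at most \<open>|M| - d\<close> rows, where \<open>d\<close> is
  the least side-information size in \<open>M\<close>. The rows of \<open>G\<close> keep a surplus of \<open>d\<close>: every
  nonempty set \<open>X\<close> of rows has at least \<open>|X| + d\<close> columns in its support. A new row
  \<open>{w} \<union> A_w\<close> could only break this by lying in the support of a tight set \<open>X\<close>; but then,
  by Koenig's theorem (maximum matching = minimum vertex cover) and submodularity of the cover
  size, column \<open>w\<close> already raised the matching number of the earlier rows, so receiver \<open>w\<close>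
  would have been removed before. Applied to all \<open>K\<close> rows, the surplus gives \<open>K + d \<le> |M|\<close>.
\<close>

definition matching :: "('a \<times> 'b) set \<Rightarrow> ('a \<times> 'b) set \<Rightarrow> bool" where
  "matching E P \<longleftrightarrow> P \<subseteq> E \<and> inj_on fst P \<and> inj_on snd P"

lemma card_Image_Un_avoiding:
  assumes "finite E"
  shows "card (E `` (Z \<union> Y)) = card ({p \<in> E. snd p \<notin> E `` Y} `` Z) + card (E `` Y)"
proof -
  have "E `` (Z \<union> Y) = {p \<in> E. snd p \<notin> E `` Y} `` Z \<union> E `` Y"
    by (auto simp: Image_iff)
  moreover have "{p \<in> E. snd p \<notin> E `` Y} `` Z \<inter> E `` Y = {}"
    by auto
  ultimately show ?thesis
    using assms by (simp add: card_Un_disjoint)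
qed

lemma hall_condition_remove_value:
  assumes "finite E" "Y \<subseteq> R - {r0}" "r0 \<in> R"
    and surplus: "\<And>Y. Y \<noteq> {} \<Longrightarrow> Y \<subset> R \<Longrightarrow> card Y < card (E `` Y)"
  shows "card Y \<le> card ({p \<in> E. snd p \<noteq> c} `` Y)"
proof (cases "Y = {}")
  case False
  with assms(2,3) surplus have "card Y < card (E `` Y)"
    by blast
  also have "\<dots> \<le> card (insert c ({p \<in> E. snd p \<noteq> c} `` Y))"
    using assms(1) by (intro card_mono) auto
  also have "\<dots> \<le> Suc (card ({p \<in> E. snd p \<noteq> c} `` Y))"
    using assms(1) by (simp add: card_insert_if)
  finally show ?thesis
    by simp
qed simp

lemma hall_condition_remove_critical:
  assumes "finite R" "finite E"
    and hall: "\<And>Y. Y \<subseteq> R \<Longrightarrow> card Y \<le> card (E `` Y)"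
    and Y: "Y \<subseteq> R" "card (E `` Y) = card Y"
    and Z: "Z \<subseteq> R - Y"
  shows "card Z \<le> card ({p \<in> E. snd p \<notin> E `` Y} `` Z)"
proof -
  have "card Z + card Y = card (Z \<union> Y)"
    using Z Y(1) assms(1) by (subst card_Un_disjoint) (auto dest: finite_subset)
  also have "\<dots> \<le> card (E `` (Z \<union> Y))"
    using Z Y(1) by (intro hall) auto
  also have "\<dots> = card ({p \<in> E. snd p \<notin> E `` Y} `` Z) + card Y"
    using card_Image_Un_avoiding[OF assms(2)] Y(2) by simp
  finally show ?thesis
    by simp
qed

lemma ex_sdr_Un:
  assumes "Y \<subseteq> R" "inj_on f1 Y" "\<forall>r\<in>Y. (r, f1 r) \<in> E"
    and "inj_on f2 (R - Y)" "\<forall>r\<in>R - Y. (r, f2 r) \<in> E \<and> f2 r \<notin> E `` Y"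
  shows "\<exists>f. inj_on f R \<and> (\<forall>r\<in>R. (r, f r) \<in> E)"
proof -
  define f where "f r = (if r \<in> Y then f1 r else f2 r)" for r
  have "f ` Y \<subseteq> E `` Y" "f ` (R - Y) \<inter> E `` Y = {}"
    using assms(3,5) by (auto simp: f_def)
  then have "inj_on f (Y \<union> (R - Y))"
    using assms(2,4) unfolding inj_on_Un by (auto simp: f_def inj_on_def)
  moreover have "Y \<union> (R - Y) = R"
    using assms(1) by blast
  moreover have "\<forall>r\<in>R. (r, f r) \<in> E"
    using assms(3,5) by (auto simp: f_def)
  ultimately show ?thesis
    by auto
qed

lemma ex_sdr_insert:
  assumes "inj_on f R" "\<forall>r\<in>R. (r, f r) \<in> E \<and> f r \<noteq> c" "(r0, c) \<in> E"
  shows "\<exists>f. inj_on f (insert r0 R) \<and> (\<forall>r\<in>insert r0 R. (r, f r) \<in> E)"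
proof (intro exI conjI)
  show "inj_on (f(r0 := c)) (insert r0 R)"
    using assms(1,2) by (auto simp: inj_on_def)
  show "\<forall>r\<in>insert r0 R. (r, (f(r0 := c)) r) \<in> E"
    using assms(2,3) by auto
qed

theorem hall_marriage:
  fixes E :: "('a \<times> 'b) set"
  assumes "finite R" "finite E" "\<And>Y. Y \<subseteq> R \<Longrightarrow> card Y \<le> card (E `` Y)"
  shows "\<exists>f. inj_on f R \<and> (\<forall>r\<in>R. (r, f r) \<in> E)"
  using assms
proof (induction "card R" arbitrary: R E rule: less_induct)
  case less
  show ?case
  proof (cases "\<exists>Y. Y \<noteq> {} \<and> Y \<subset> R \<and> card (E `` Y) = card Y")
    case True
    then obtain Y where Y: "Y \<noteq> {}" "Y \<subset> R" "card (E `` Y) = card Y"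
      by blast
    have "\<exists>f1. inj_on f1 Y \<and> (\<forall>r\<in>Y. (r, f1 r) \<in> E)"
    proof (rule less.hyps)
      show "card Y < card R"
        using Y(2) less.prems(1) by (rule psubset_card_mono[rotated])
      show "finite Y"
        using Y(2) less.prems(1) by (meson finite_subset psubset_imp_subset)
      show "card Z \<le> card (E `` Z)" if "Z \<subseteq> Y" for Z
        using less.prems(3) that Y(2) by blast
    qed (rule less.prems(2))
    moreover have "\<exists>f2. inj_on f2 (R - Y) \<and> (\<forall>r\<in>R - Y. (r, f2 r) \<in> {p \<in> E. snd p \<notin> E `` Y})"
    proof (rule less.hyps)
      show "card (R - Y) < card R"
        using Y less.prems(1) by (intro psubset_card_mono) auto
      show "card Z \<le> card ({p \<in> E. snd p \<notin> E `` Y} `` Z)" if "Z \<subseteq> R - Y" for Z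
        using hall_condition_remove_critical[OF less.prems psubset_imp_subset[OF Y(2)] Y(3) that] .
    qed (use less.prems(1,2) in auto)
    ultimately show ?thesis
      using ex_sdr_Un[OF psubset_imp_subset[OF Y(2)]] by auto
  next
    case no_critical: False
    show ?thesis
    proof (cases "R = {}")
      case False
      then obtain r0 where r0: "r0 \<in> R"
        by blast
      then have "E `` {r0} \<noteq> {}"
        using less.prems(3)[of "{r0}"] by auto
      then obtain c where c: "(r0, c) \<in> E"
        by blast
      have surplus: "card Y < card (E `` Y)" if "Y \<noteq> {}" "Y \<subset> R" for Y
        using no_critical less.prems(3)[of Y] that by (metis nat_less_le psubset_imp_subset)
      have "\<exists>f. inj_on f (R - {r0}) \<and> (\<forall>r\<in>R - {r0}. (r, f r) \<in> {p \<in> E. snd p \<noteq> c})"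
      proof (rule less.hyps)
        show "card (R - {r0}) < card R"
          using less.prems(1) r0 by (rule card_Diff1_less)
        show "card Y \<le> card ({p \<in> E. snd p \<noteq> c} `` Y)" if "Y \<subseteq> R - {r0}" for Y
          using hall_condition_remove_value[OF less.prems(2) that r0 surplus] .
      qed (use less.prems(1,2) in auto)
      then obtain f where "inj_on f (R - {r0})" "\<forall>r\<in>R - {r0}. (r, f r) \<in> E \<and> f r \<noteq> c"
        by auto
      from ex_sdr_insert[OF this c] show ?thesis
        using r0 by (simp add: insert_absorb)
    qed simp
  qed
qed

text \<open>For \<open>Domain E \<subseteq> R\<close>, the size of the vertex cover \<open>(R - Y) \<union> E `` Y\<close> of \<open>E\<close>.\<close>

definition cover_card :: "('a \<times> 'b) set \<Rightarrow> 'a set \<Rightarrow> 'a set \<Rightarrow> nat" where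
  "cover_card E R Y = card (R - Y) + card (E `` Y)"

lemma matching_card_le_cover_card:
  assumes "finite E" "finite R" "Domain E \<subseteq> R" "matching E P"
  shows "card P \<le> cover_card E R Y"
proof -
  have P: "P \<subseteq> E" "inj_on fst P" "inj_on snd P"
    using assms(4) unfolding matching_def by auto
  then have "finite P"
    using assms(1) finite_subset by blast
  have "fst ` P \<subseteq> R"
    using P(1) assms(3) by force
  have "card {p \<in> P. fst p \<in> Y} \<le> card (E `` Y)"
    using P assms(1) by (intro card_inj_on_le[where f = snd])
      (auto intro: inj_on_subset rev_ImageI[OF _ subsetD[OF P(1)]])
  moreover have "card {p \<in> P. fst p \<notin> Y} \<le> card (R - Y)"
    using P \<open>fst ` P \<subseteq> R\<close> assms(2)
    by (intro card_inj_on_le[where f = fst]) (auto intro: inj_on_subset)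
  moreover have "card P = card {p \<in> P. fst p \<in> Y} + card {p \<in> P. fst p \<notin> Y}"
    using \<open>finite P\<close> by (subst card_Un_disjoint[symmetric]) (auto intro: arg_cong[where f = card])
  ultimately show ?thesis
    unfolding cover_card_def by linarith
qed

lemma min_cover_hall_inside:
  assumes "finite E" "finite R" "Y \<subseteq> R"
    and min: "\<And>Y'. Y' \<subseteq> R \<Longrightarrow> cover_card E R Y \<le> cover_card E R Y'"
    and Z: "Z \<subseteq> E `` Y"
  shows "card Z \<le> card ({(c, r). (r, c) \<in> E \<and> r \<in> Y} `` Z)"
proof -
  define E' where "E' = {(c, r). (r, c) \<in> E \<and> r \<in> Y}"
  have "finite E'"
    unfolding E'_def by (rule finite_subset[of _ "converse E"]) (use assms(1) in auto)
  have "cover_card E R Y \<le> cover_card E R (Y - E' `` Z)"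
    using assms(3) by (intro min) auto
  then have "card (R - Y) + card (E `` Y) \<le> card (R - (Y - E' `` Z)) + card (E `` (Y - E' `` Z))"
    unfolding cover_card_def .
  moreover have "card (R - (Y - E' `` Z)) = card (R - Y) + card (E' `` Z)"
  proof -
    have "R - (Y - E' `` Z) = (R - Y) \<union> E' `` Z" "(R - Y) \<inter> E' `` Z = {}"
      using assms(3) unfolding E'_def by auto
    then show ?thesis
      using assms(2) \<open>finite E'\<close> by (simp add: card_Un_disjoint)
  qed
  moreover have "card (E `` (Y - E' `` Z)) + card Z \<le> card (E `` Y)"
  proof -
    have "E `` (Y - E' `` Z) \<subseteq> E `` Y - Z"
      unfolding E'_def by auto
    then have "card (E `` (Y - E' `` Z)) \<le> card (E `` Y - Z)"
      using assms(1) by (intro card_mono) auto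
    also have "\<dots> = card (E `` Y) - card Z"
      using Z assms(1) by (simp add: card_Diff_subset finite_subset)
    finally show ?thesis
      using card_mono[OF finite_Image[OF assms(1)] Z] by linarith
  qed
  ultimately show ?thesis
    unfolding E'_def by linarith
qed

lemma min_cover_hall_outside:
  assumes "finite E" "finite R" "Y \<subseteq> R"
    and min: "\<And>Y'. Y' \<subseteq> R \<Longrightarrow> cover_card E R Y \<le> cover_card E R Y'"
    and Z: "Z \<subseteq> R - Y"
  shows "card Z \<le> card ({p \<in> E. snd p \<notin> E `` Y} `` Z)"
proof -
  have "cover_card E R Y \<le> cover_card E R (Z \<union> Y)"
    using assms(3) Z by (intro min) auto
  then have "card (R - Y) + card (E `` Y) \<le> card (R - (Z \<union> Y)) + card (E `` (Z \<union> Y))"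
    unfolding cover_card_def .
  moreover have "card (R - Y) = card (R - (Z \<union> Y)) + card Z"
  proof -
    have "R - Y = (R - (Z \<union> Y)) \<union> Z" "(R - (Z \<union> Y)) \<inter> Z = {}"
      using Z by auto
    moreover have "finite Z"
      using Z assms(2) finite_subset by blast
    ultimately show ?thesis
      using assms(2) by (simp add: card_Un_disjoint)
  qed
  ultimately show ?thesis
    using card_Image_Un_avoiding[OF assms(1), of Z Y] by linarith
qed

lemma matching_Un:
  assumes "matching E P1" "matching E P2"
    and "fst ` P1 \<inter> fst ` P2 = {}" "snd ` P1 \<inter> snd ` P2 = {}"
  shows "matching E (P1 \<union> P2)"
  using assms unfolding matching_def inj_on_Un by blast

theorem koenig_min_cover:
  assumes "finite E" "finite R"
  shows "\<exists>Y\<subseteq>R. \<exists>P. matching E P \<and> card P = cover_card E R Y"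
proof -
  obtain Y where Y: "Y \<subseteq> R" and min: "\<And>Y'. Y' \<subseteq> R \<Longrightarrow> cover_card E R Y \<le> cover_card E R Y'"
    using ex_has_least_nat[of "\<lambda>Y. Y \<subseteq> R" "{}" "cover_card E R"] by blast
  have "finite {(c, r). (r, c) \<in> E \<and> r \<in> Y}"
    by (rule finite_subset[of _ "converse E"]) (use assms(1) in auto)
  then obtain g where g: "inj_on g (E `` Y)" "\<forall>c\<in>E `` Y. (c, g c) \<in> {(c, r). (r, c) \<in> E \<and> r \<in> Y}"
    using hall_marriage[OF finite_Image[OF assms(1)]] min_cover_hall_inside[OF assms Y min]
    by blast
  obtain f where f: "inj_on f (R - Y)" "\<forall>r\<in>R - Y. (r, f r) \<in> {p \<in> E. snd p \<notin> E `` Y}"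
    using hall_marriage[OF finite_Diff[OF assms(2)]] min_cover_hall_outside[OF assms Y min] assms(1)
    by (metis (no_types, lifting) finite_subset mem_Collect_eq subsetI)
  define P1 where "P1 = (\<lambda>c. (g c, c)) ` (E `` Y)"
  define P2 where "P2 = (\<lambda>r. (r, f r)) ` (R - Y)"
  have "matching E P1"
    using g unfolding P1_def matching_def by (auto simp: inj_on_def)
  moreover have "matching E P2"
    using f unfolding P2_def matching_def by (auto simp: inj_on_def)
  moreover have "fst ` P1 \<inter> fst ` P2 = {}" "snd ` P1 \<inter> snd ` P2 = {}"
    using g f unfolding P1_def P2_def by (auto simp: Image_iff)
  ultimately have "matching E (P1 \<union> P2)" "P1 \<inter> P2 = {}"
    using matching_Un by blast+
  moreover have "card P1 = card (E `` Y)" "card P2 = card (R - Y)"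
    unfolding P1_def P2_def by (auto intro: card_image simp: inj_on_def)
  ultimately have "matching E (P1 \<union> P2)" "card (P1 \<union> P2) = cover_card E R Y"
    using assms unfolding P1_def P2_def cover_card_def by (auto simp: card_Un_disjoint)
  then show ?thesis
    using Y by blast
qed

lemma cover_card_submodular:
  assumes "finite E" "finite R"
  shows "cover_card E R (Y \<union> X) + cover_card E R (Y \<inter> X) \<le> cover_card E R Y + cover_card E R X"
proof -
  have "card (R - (Y \<union> X)) + card (R - (Y \<inter> X)) = card (R - Y) + card (R - X)"
    using card_Un_Int[of "R - Y" "R - X"] assms(2) by (simp add: Diff_Int Diff_Un)
  moreover have "card (E `` (Y \<inter> X)) \<le> card (E `` Y \<inter> E `` X)"
    using assms(1) by (intro card_mono) auto
  moreover have "card (E `` (Y \<union> X)) + card (E `` Y \<inter> E `` X) = card (E `` Y) + card (E `` X)"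
    using card_Un_Int[of "E `` Y" "E `` X"] assms(1) by (simp add: Image_Un)
  ultimately show ?thesis
    unfolding cover_card_def by linarith
qed

definition row_support :: "nat set list \<Rightarrow> nat set \<Rightarrow> nat set" where
  "row_support rows X = (\<Union>j\<in>X. rows ! j)"

definition row_graph :: "nat set list \<Rightarrow> nat \<Rightarrow> nat set \<Rightarrow> (nat \<times> nat) set" where
  "row_graph rows k L = {(r, c). r < k \<and> c \<in> L \<and> c \<in> rows ! r}"

lemma row_support_mono: "X \<subseteq> Y \<Longrightarrow> row_support rows X \<subseteq> row_support rows Y"
  unfolding row_support_def by auto

lemma row_graph_Image: "Y \<subseteq> {0..<k} \<Longrightarrow> row_graph rows k L `` Y = row_support rows Y \<inter> L"
  unfolding row_graph_def row_support_def by fastforce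

lemma finite_row_graph: "finite L \<Longrightarrow> finite (row_graph rows k L)"
  unfolding row_graph_def by (rule finite_subset[of _ "{0..<k} \<times> L"]) auto

lemma mcm_eq_Max_matching: "mcm rows k L = Max (card ` {P. matching (row_graph rows k L) P})"
  unfolding mcm_def matching_def row_graph_def
  by (rule arg_cong[where f = Max]) (auto simp: subset_iff)

lemma finite_matchings: "finite E \<Longrightarrow> finite {P. matching E P}"
  unfolding matching_def by simp

lemma mcm_le_cover_card:
  assumes "finite L"
  shows "mcm rows k L \<le> cover_card (row_graph rows k L) {0..<k} Y"
  unfolding mcm_eq_Max_matching
proof (rule Max.boundedI)
  show "finite (card ` {P. matching (row_graph rows k L) P})"
    using finite_matchings[OF finite_row_graph[OF assms, of rows k]] by simp
  have "matching (row_graph rows k L) {}"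
    unfolding matching_def by simp
  then show "card ` {P. matching (row_graph rows k L) P} \<noteq> {}"
    by blast
  have "Domain (row_graph rows k L) \<subseteq> {0..<k}"
    unfolding row_graph_def by auto
  then show "n \<le> cover_card (row_graph rows k L) {0..<k} Y"
    if "n \<in> card ` {P. matching (row_graph rows k L) P}" for n
    using that matching_card_le_cover_card[OF finite_row_graph[OF assms] finite_atLeastLessThan]
    by auto
qed

lemma mcm_eq_cover_card:
  assumes "finite L"
  shows "\<exists>Y\<subseteq>{0..<k}. mcm rows k L = cover_card (row_graph rows k L) {0..<k} Y"
proof -
  obtain Y P where Y: "Y \<subseteq> {0..<k}" and P: "matching (row_graph rows k L) P"
    "card P = cover_card (row_graph rows k L) {0..<k} Y"
    using koenig_min_cover[OF finite_row_graph[OF assms, of rows k], of "{0..<k}"] by auto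
  have "card P \<le> mcm rows k L"
    unfolding mcm_eq_Max_matching
    using finite_matchings[OF finite_row_graph[OF assms, of rows k]] P(1) by (intro Max_ge) auto
  then show ?thesis
    using mcm_le_cover_card[OF assms, of rows k Y] P(2) Y by (intro exI[of _ Y]) simp
qed

lemma cover_card_row_graph:
  "Y \<subseteq> {0..<k} \<Longrightarrow>
    cover_card (row_graph rows k L) {0..<k} Y = k - card Y + card (row_support rows Y \<inter> L)"
  unfolding cover_card_def by (simp add: row_graph_Image card_Diff_subset finite_subset)

lemma cover_card_row_graph_insert:
  assumes "finite B" "w \<notin> B" "Y \<subseteq> {0..<k}"
  shows "cover_card (row_graph rows k (insert w B)) {0..<k} Y =
    cover_card (row_graph rows k B) {0..<k} Y + (if w \<in> row_support rows Y then 1 else 0)"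
proof -
  have "row_support rows Y \<inter> insert w B =
      (if w \<in> row_support rows Y then insert w (row_support rows Y \<inter> B) else row_support rows Y \<inter> B)"
    by auto
  then show ?thesis
    using assms by (simp add: cover_card_row_graph)
qed

lemma mcm_insert_le_Suc:
  assumes "finite B" "w \<notin> B"
  shows "mcm rows k (insert w B) \<le> Suc (mcm rows k B)"
proof -
  obtain Y where "Y \<subseteq> {0..<k}" "mcm rows k B = cover_card (row_graph rows k B) {0..<k} Y"
    using mcm_eq_cover_card[OF assms(1)] by blast
  have "mcm rows k (insert w B) \<le> cover_card (row_graph rows k (insert w B)) {0..<k} Y"
    using assms(1) by (simp add: mcm_le_cover_card)
  also have "\<dots> \<le> Suc (cover_card (row_graph rows k B) {0..<k} Y)"
    using cover_card_row_graph_insert[OF assms \<open>Y \<subseteq> {0..<k}\<close>] by simp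
  finally show ?thesis
    using \<open>mcm rows k B = _\<close> by simp
qed

lemma cover_card_tight_le_subset:
  assumes "finite L" "finite K" "L \<inter> K = {}" "T \<subseteq> X" "X \<subseteq> {0..<k}"
    and "row_support rows X \<subseteq> L \<union> K" "K \<subseteq> row_support rows X"
    and tight: "card (row_support rows X) = card X + d" and "d \<le> card K"
    and surplus: "T \<noteq> {} \<Longrightarrow> card T + d \<le> card (row_support rows T)"
  shows "cover_card (row_graph rows k L) {0..<k} X \<le> cover_card (row_graph rows k L) {0..<k} T"
proof -
  have "finite (row_support rows X)"
    using assms(1,2,6) finite_subset by blast
  have "row_support rows X = (row_support rows X \<inter> L) \<union> K" "(row_support rows X \<inter> L) \<inter> K = {}"
    using assms(3,6,7) by auto
  then have X: "card (row_support rows X \<inter> L) + card K = card X + d"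
    using tight assms(1,2) by (metis card_Un_disjoint finite_Int)
  have "row_support rows T \<subseteq> (row_support rows T \<inter> L) \<union> K"
    using row_support_mono[OF assms(4)] assms(6) by blast
  then have "card (row_support rows T) \<le> card (row_support rows T \<inter> L) + card K"
    using assms(1,2) by (meson card_Un_le card_mono finite_Int finite_UnI order_trans)
  then have T: "card T + d \<le> card (row_support rows T \<inter> L) + card K"
    using surplus assms(9) by (cases "T = {}") auto
  have "card T \<le> card X" "card X \<le> k"
    using assms(4,5)
    by (meson card_mono finite_atLeastLessThan finite_subset subset_eq_atLeast0_lessThan_card)+
  then show ?thesis
    using X T assms(4,5) by (simp add: cover_card_row_graph)
qed

lemma mcm_insert_eq_Suc_if_tight:
  assumes "finite B" "finite K" "w \<notin> B" "insert w B \<inter> K = {}" "X \<subseteq> {0..<k}"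
    and "row_support rows X \<subseteq> insert w B \<union> K" "insert w K \<subseteq> row_support rows X"
    and "card (row_support rows X) = card X + d" "d \<le> card K"
    and surplus: "\<And>T. T \<subseteq> X \<Longrightarrow> T \<noteq> {} \<Longrightarrow> card T + d \<le> card (row_support rows T)"
  shows "mcm rows k (insert w B) = Suc (mcm rows k B)"
proof -
  \<comment> \<open>A minimum cover \<open>Y\<close> for the columns \<open>insert w B\<close> may be enlarged by the tight set \<open>X\<close>;
    since \<open>w\<close> lies in the support of \<open>X\<close>, dropping column \<open>w\<close> then saves one.\<close>
  let ?C = "row_graph rows k (insert w B)" and ?B = "row_graph rows k B"
  obtain Y where Y: "Y \<subseteq> {0..<k}" "mcm rows k (insert w B) = cover_card ?C {0..<k} Y"
    using mcm_eq_cover_card[of "insert w B"] assms(1) by blast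
  have "cover_card ?C {0..<k} X \<le> cover_card ?C {0..<k} (Y \<inter> X)"
    using assms(1-9) surplus[of "Y \<inter> X"] by (intro cover_card_tight_le_subset) auto
  then have "cover_card ?C {0..<k} (Y \<union> X) \<le> cover_card ?C {0..<k} Y"
    using cover_card_submodular[of ?C "{0..<k}" Y X] finite_row_graph assms(1) by simp
  moreover have "w \<in> row_support rows (Y \<union> X)"
    using assms(7) row_support_mono[of X "Y \<union> X"] by blast
  then have "cover_card ?C {0..<k} (Y \<union> X) = Suc (cover_card ?B {0..<k} (Y \<union> X))"
    using cover_card_row_graph_insert[OF assms(1,3)] Y(1) assms(5) by simp
  moreover have "mcm rows k B \<le> cover_card ?B {0..<k} (Y \<union> X)"
    using mcm_le_cover_card[OF assms(1)] .
  ultimately have "Suc (mcm rows k B) \<le> mcm rows k (insert w B)"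
    using Y(2) by linarith
  then show ?thesis
    using mcm_insert_le_Suc[OF assms(1,3), of rows k] by linarith
qed

definition has_surplus :: "nat set list \<Rightarrow> nat \<Rightarrow> bool" where
  "has_surplus rows d \<longleftrightarrow>
    (\<forall>X\<subseteq>{0..<length rows}. X \<noteq> {} \<longrightarrow> card X + d \<le> card (row_support rows X))"

lemma row_support_append:
  "X \<subseteq> {0..<length rows} \<Longrightarrow> row_support (rows @ [r]) X = row_support rows X"
  unfolding row_support_def by (auto simp: nth_append subset_iff)

lemma row_support_append_insert:
  "X \<subseteq> {0..<length rows} \<Longrightarrow>
    row_support (rows @ [r]) (insert (length rows) X) = r \<union> row_support rows X"
  using row_support_append[of X rows r] unfolding row_support_def by simp

lemma has_surplus_append:
  assumes surplus: "has_surplus rows d" and "d < card r" and "finite (\<Union>(set rows))"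
    and no_tight: "\<And>X. X \<subseteq> {0..<length rows} \<Longrightarrow> X \<noteq> {} \<Longrightarrow>
      card (row_support rows X) = card X + d \<Longrightarrow> \<not> r \<subseteq> row_support rows X"
  shows "has_surplus (rows @ [r]) d"
  unfolding has_surplus_def
proof (intro allI impI)
  fix X assume X: "X \<subseteq> {0..<length (rows @ [r])}" "X \<noteq> {}"
  let ?k = "length rows"
  show "card X + d \<le> card (row_support (rows @ [r]) X)"
  proof (cases "?k \<in> X")
    case False
    then have "X \<subseteq> {0..<?k}"
      using X(1) by (auto simp: less_Suc_eq)
    then show ?thesis
      using surplus X(2) row_support_append[of X rows r] unfolding has_surplus_def by simp
  next
    case True
    define X' where "X' = X - {?k}"
    have X': "X' \<subseteq> {0..<?k}" "X = insert ?k X'"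
      using X(1) True unfolding X'_def by (auto simp: less_Suc_eq)
    have "card X = Suc (card X')"
      using card_Suc_Diff1[OF finite_subset[OF X(1)] True] unfolding X'_def by simp
    have "(!) rows ` X' \<subseteq> set rows"
      using X'(1) by auto
    then have "row_support rows X' \<subseteq> \<Union>(set rows)"
      unfolding row_support_def by blast
    moreover have "finite r"
      using assms(2) by (intro card_ge_0_finite) linarith
    ultimately have "finite (r \<union> row_support rows X')"
      using assms(3) finite_subset by blast
    then have le: "card (row_support rows X') \<le> card (r \<union> row_support rows X')"
      by (intro card_mono) auto
    have "Suc (card X' + d) \<le> card (r \<union> row_support rows X')"
    proof (cases "X' = {}")
      case True
      then show ?thesis
        using assms(2) by (simp add: row_support_def)
    next
      case False
      then have ge: "card X' + d \<le> card (row_support rows X')"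
        using surplus X'(1) unfolding has_surplus_def by simp
      show ?thesis
      proof (cases "card (row_support rows X') = card X' + d")
        case True
        then have "row_support rows X' \<subset> r \<union> row_support rows X'"
          using no_tight[OF X'(1) False] by blast
        then have "card (row_support rows X') < card (r \<union> row_support rows X')"
          by (rule psubset_card_mono[OF \<open>finite (r \<union> row_support rows X')\<close>])
        with True show ?thesis
          by simp
      qed (use ge le in linarith)
    qed
    then show ?thesis
      using X' \<open>card X = Suc (card X')\<close> row_support_append_insert[OF X'(1)] by simp
  qed
qed

lemma umcd_exec_subset:
  "umcd_exec A V N rows \<Longrightarrow> N \<subseteq> V \<and> (\<forall>r\<in>set rows. r \<subseteq> V)"
  by (induction rule: umcd_exec.induct) auto

lemma umcd_exec_not_decodable:
  assumes "umcd_exec A V N rows" "rows \<noteq> []" "i \<in> N"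
  shows "mcm rows (length rows) (insert i (V - (A i \<union> {i})))
    \<noteq> Suc (mcm rows (length rows) (V - (A i \<union> {i})))"
  using assms by (cases rule: umcd_exec.cases) auto

lemma umcd_exec_row_not_in_tight_support:
  assumes exec: "umcd_exec A V N rows" and "finite V" "\<forall>i\<in>V. i \<notin> A i" "w \<in> N"
    and surplus: "has_surplus rows d" and "d \<le> card (A w \<inter> V)"
    and X: "X \<subseteq> {0..<length rows}" "X \<noteq> {}" "card (row_support rows X) = card X + d"
  shows "\<not> insert w (A w \<inter> V) \<subseteq> row_support rows X"
proof
  assume cov: "insert w (A w \<inter> V) \<subseteq> row_support rows X"
  define B where "B = V - (A w \<union> {w})"
  have V: "N \<subseteq> V" "\<forall>r\<in>set rows. r \<subseteq> V"
    using umcd_exec_subset[OF exec] by auto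
  have "w \<in> V" "w \<notin> A w"
    using assms(3,4) V(1) by auto
  have "(!) rows ` X \<subseteq> set rows"
    using X(1) by auto
  then have "row_support rows X \<subseteq> insert w B \<union> (A w \<inter> V)"
    using V(2) \<open>w \<in> V\<close> unfolding row_support_def B_def by blast
  then have "mcm rows (length rows) (insert w B) = Suc (mcm rows (length rows) B)"
    using assms(2,6) X cov surplus \<open>w \<notin> A w\<close> unfolding has_surplus_def
    by (intro mcm_insert_eq_Suc_if_tight[where K = "A w \<inter> V" and X = X and d = d])
       (auto simp: B_def)
  moreover have "rows \<noteq> []"
    using X(1,2) by auto
  ultimately show False
    using umcd_exec_not_decodable[OF exec _ assms(4)] unfolding B_def by simp
qed

lemma umcd_exec_has_surplus:
  assumes "umcd_exec A V N rows" "finite V" "\<forall>i\<in>V. i \<notin> A i"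
  shows "has_surplus rows (MIN i\<in>V. card (V \<inter> A i))"
  using assms(1)
proof (induction rule: umcd_exec.induct)
  case init
  then show ?case
    by (simp add: has_surplus_def)
next
  case (step N rows w rows' N')
  define d where "d = (MIN i\<in>V. card (V \<inter> A i))"
  have V: "N \<subseteq> V" "\<forall>r\<in>set rows. r \<subseteq> V"
    using umcd_exec_subset[OF step.hyps(1)] by auto
  then have "w \<in> V" "w \<notin> A w"
    using step.hyps(3) assms(3) by auto
  have "d \<le> card (A w \<inter> V)"
    unfolding d_def using \<open>w \<in> V\<close> assms(2) by (simp add: Int_commute)
  also have "\<dots> < card (insert w (A w \<inter> V))"
    using \<open>w \<notin> A w\<close> assms(2) by simp
  finally have "d < card (insert w (A w \<inter> V))" .
  moreover have "finite (\<Union>(set rows))"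
    using V(2) assms(2) by (meson Sup_least finite_subset)
  ultimately show ?case
    using has_surplus_append[OF step.IH[folded d_def]] step.hyps(5)
      umcd_exec_row_not_in_tight_support[OF step.hyps(1) assms(2,3) step.hyps(3) step.IH[folded d_def]]
      \<open>d \<le> card (A w \<inter> V)\<close>
    unfolding d_def by simp
qed

lemma umcd_output_le_beta_mds:
  assumes "umcd_output A M K" "finite M" "\<forall>i\<in>M. i \<notin> A i"
  shows "K \<le> beta_mds A M"
proof -
  obtain rows where rows: "umcd_exec A M {} rows" "length rows = K"
    using assms(1) unfolding umcd_output_def by blast
  show ?thesis
  proof (cases "K = 0")
    case False
    have "K + (MIN i\<in>M. card (M \<inter> A i)) \<le> card (row_support rows {0..<K})"
      using umcd_exec_has_surplus[OF rows(1) assms(2,3)] False rows(2)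
      unfolding has_surplus_def by (auto elim!: allE[of _ "{0..<K}"])
    also have "\<dots> \<le> card M"
      using umcd_exec_subset[OF rows(1)] rows(2) assms(2) unfolding row_support_def
      by (intro card_mono) (auto simp: subset_iff)
    finally show ?thesis
      unfolding beta_mds_def by simp
  qed simp
qed

lemma Min_partition_sum_mono:
  fixes g h :: "nat set \<Rightarrow> 'b :: {ordered_comm_monoid_add, linorder}"
  assumes "finite S" "\<And>M. M \<subseteq> S \<Longrightarrow> M \<noteq> {} \<Longrightarrow> g M \<le> h M"
  shows "Min {(\<Sum>M\<in>P. g M) | P. is_partition S P} \<le> Min {(\<Sum>M\<in>P. h M) | P. is_partition S P}"
proof -
  have fin: "finite {(\<Sum>M\<in>P. u M) | P. is_partition S P}" for u :: "nat set \<Rightarrow> 'b"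
  proof (rule finite_subset)
    show "{(\<Sum>M\<in>P. u M) | P. is_partition S P} \<subseteq> (\<lambda>P. \<Sum>M\<in>P. u M) ` Pow (Pow S)"
      unfolding is_partition_def by blast
  qed (use assms(1) in simp)
  have "is_partition S ((\<lambda>i. {i}) ` S)"
    using assms(1) unfolding is_partition_def by auto
  then obtain P where P: "is_partition S P"
    "Min {(\<Sum>M\<in>P. h M) | P. is_partition S P} = (\<Sum>M\<in>P. h M)"
    using Min_in[OF fin[of h]] by blast
  have "Min {(\<Sum>M\<in>P. g M) | P. is_partition S P} \<le> (\<Sum>M\<in>P. g M)"
    using P(1) fin[of g] by (intro Min_le) auto
  also have "\<dots> \<le> (\<Sum>M\<in>P. h M)"
    using P(1) assms(2) unfolding is_partition_def by (intro sum_mono) auto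
  finally show ?thesis
    using P(2) by simp
qed

theorem proposition12:
  fixes m :: nat and A :: "nat \<Rightarrow> nat set" and f :: "nat set \<Rightarrow> nat"
  assumes side_info: "\<forall>i\<in>{1..m}. A i \<subseteq> {1..m} - {i}"
    and fixed_exec: "\<forall>M. M \<subseteq> {1..m} \<and> M \<noteq> {} \<longrightarrow> umcd_output A M (f M)"
  shows "beta_pumcd m f \<le> beta_pcc m A"
  unfolding beta_pumcd_def beta_pcc_def
proof (rule Min_partition_sum_mono)
  fix M assume M: "M \<subseteq> {1..m}" "M \<noteq> {}"
  show "f M \<le> beta_mds A M"
    using fixed_exec side_info M finite_subset[OF M(1)] by (intro umcd_output_le_beta_mds) auto
qed simp

end
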